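(* Let $q\ge 1$ and $t\ge0$ be integers. (1) If a code $\mathcal{C}\subseteq\mathcal{S}_{\mathrm{all}}^q$ is a $2t$-tail-deletion-correcting code, then it is a $t$-tail-indel-correcting code. However, the converse does not hold in general: there exist $q$, $t$ and a code $\mathcal{C}\subseteq\mathcal{S}_{\mathrm{all}}^q$ that is $t$-tail-indel-correcting but not $2t$-tail-deletion-correcting. (2) For every integer $t\ge1$ there exist an integer $q$ and a code $\mathcal{C}\subseteq\mathcal{S}_{\mathrm{all}}^q$ that is a $(2t-1)$-tail-deletion-correcting code but not a $t$-tail-indel-correcting code.
   Context: Let $[q]=\{0,1,\dots,q-1\}$. For $1\le m\le q$, a partial permutation of length $m$ over $[q]$ is a sequence $\pi=(\pi_1,\dots,\pi_m)$ of $m$ pairwise distinct elements of $[q]$. Let $\mathcal{S}_m^q$ be the set of those of length $m$ and $\mathcal{S}_{\mathrm{all}}^q=\bigcup_{m=1}^{q}\mathcal{S}_m^q$. A code is any subset of $\mathcal{S}_{\mathrm{all}}^q$. Tail deletions: for $\pi$ of length $m$ and integer $j\ge 0$, $\pi_{\downarrow j}=(\pi_{k+1},\dots,\pi_m)$ with $k=\min(j,m-1)$ (leftmost symbols are deleted; the last symbol is never deleted); $\mathcal{B}_{\mathrm{del}}^t(\pi)=\{\pi_{\downarrow j}:0\le j\le t\}$. Tail indels: $\mathcal{B}_{\mathrm{indel}}^t(\pi)$ is the set of all partial permutations obtainable from $\pi$ by a sequence of at most $t$ operations, each being either a single tail deletion (removing the first symbol of a partial permutation of length at least $2$) or a single tail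 insertion (prepending an element of $[q]$ not already occurring in it). For $X\in\{\mathrm{del},\mathrm{indel}\}$, a code $\mathcal{C}$ is $t$-tail-$X$-correcting if $\mathcal{B}_X^t(\pi_1)\cap\mathcal{B}_X^t(\pi_2)=\emptyset$ for all distinct $\pi_1,\pi_2\in\mathcal{C}$. *)

theory Defs
  imports Main
begin

text \<open>Partial permutations over [q] = {0..q-1} are represented as lists of naturals.\<close>

definition pperm :: "nat \<Rightarrow> nat list \<Rightarrow> bool" where
  "pperm q \<pi> \<longleftrightarrow> distinct \<pi> \<and> set \<pi> \<subseteq> {..<q} \<and> 1 \<le> length \<pi> \<and> length \<pi> \<le> q"

definition S_all :: "nat \<Rightarrow> nat list set" where
  "S_all q = {\<pi>. pperm q \<pi>}"

definition tail_del :: "nat list \<Rightarrow> nat \<Rightarrow> nat list" where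
  "tail_del \<pi> j = drop (min j (length \<pi> - 1)) \<pi>"

definition B_del :: "nat \<Rightarrow> nat list \<Rightarrow> nat list set" where
  "B_del t \<pi> = {tail_del \<pi> j | j. j \<le> t}"

definition indel_step :: "nat \<Rightarrow> nat list \<Rightarrow> nat list \<Rightarrow> bool" where
  "indel_step q \<sigma> \<tau> \<longleftrightarrow>
     (2 \<le> length \<sigma> \<and> \<tau> = tl \<sigma>) \<or> (\<exists>a. a < q \<and> a \<notin> set \<sigma> \<and> \<tau> = a # \<sigma>)"

definition B_indel :: "nat \<Rightarrow> nat \<Rightarrow> nat list \<Rightarrow> nat list set" where
  "B_indel q t \<pi> = {\<sigma>. \<exists>k\<le>t. (indel_step q ^^ k) \<pi> \<sigma>}"

definition tail_del_correcting :: "nat \<Rightarrow> nat list set \<Rightarrow> bool" where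
  "tail_del_correcting t C \<longleftrightarrow>
     (\<forall>\<pi>1\<in>C. \<forall>\<pi>2\<in>C. \<pi>1 \<noteq> \<pi>2 \<longrightarrow> B_del t \<pi>1 \<inter> B_del t \<pi>2 = {})"

definition tail_indel_correcting :: "nat \<Rightarrow> nat \<Rightarrow> nat list set \<Rightarrow> bool" where
  "tail_indel_correcting q t C \<longleftrightarrow>
     (\<forall>\<pi>1\<in>C. \<forall>\<pi>2\<in>C. \<pi>1 \<noteq> \<pi>2 \<longrightarrow> B_indel q t \<pi>1 \<inter> B_indel q t \<pi>2 = {})"

end

theory Submission
  imports Defs
begin

text \<open>A word obtained from \<open>\<pi>\<close> by at most \<open>t\<close> tail indels has the form \<open>w @ drop k \<pi>\<close> with
  \<open>length w + k \<le> t\<close>: deletions either eat an inserted symbol or a symbol of \<open>\<pi>\<close>. If such words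
  of two codewords coincide, the shorter of the two surviving suffixes of the codewords is a
  suffix of the longer one, cut off after at most \<open>k\<^sub>i + length w\<^sub>j \<le> 2t\<close> symbols; so both
  codewords reach a common word by at most \<open>2t\<close> tail deletions. The converse fails: \<open>[0,1,2]\<close>
  and \<open>[3,2]\<close> share the word \<open>[2]\<close> after two deletions but have disjoint 1-indel balls. Nor does
  correcting \<open>2t - 1\<close> deletions suffice: \<open>[2t]\<close> and \<open>[0,\<dots>,2t]\<close> have disjoint
  \<open>(2t-1)\<close>-deletion balls by length, while \<open>t\<close> insertions into the first and \<open>t\<close> deletions from the second both yield \<open>[t,\<dots>,2t]\<close>.\<close>

lemma tail_del_eq_drop: "k < length \<pi> \<Longrightarrow> tail_del \<pi> k = drop k \<pi>"
  by (simp add: tail_del_def)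

lemma drop_mem_B_del: "k < length \<pi> \<Longrightarrow> k \<le> t \<Longrightarrow> drop k \<pi> \<in> B_del t \<pi>"
  unfolding B_del_def by (auto simp: tail_del_eq_drop[symmetric])

lemma length_mem_B_del: "\<sigma> \<in> B_del t \<pi> \<Longrightarrow> length \<pi> - t \<le> length \<sigma>"
  by (auto simp: B_del_def tail_del_def)

lemma B_del_singleton: "B_del t [a] = {[a]}"
  by (auto simp: B_del_def tail_del_def)

lemma tail_del_correcting_pair:
  "\<pi>1 \<noteq> \<pi>2 \<Longrightarrow> tail_del_correcting t {\<pi>1, \<pi>2} \<longleftrightarrow> B_del t \<pi>1 \<inter> B_del t \<pi>2 = {}"
  by (auto simp: tail_del_correcting_def)

lemma tail_indel_correcting_pair:
  "\<pi>1 \<noteq> \<pi>2 \<Longrightarrow>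
    tail_indel_correcting q t {\<pi>1, \<pi>2} \<longleftrightarrow> B_indel q t \<pi>1 \<inter> B_indel q t \<pi>2 = {}"
  by (auto simp: tail_indel_correcting_def)

lemma indel_steps_shape:
  assumes "(indel_step q ^^ n) \<pi> \<sigma>" "\<pi> \<noteq> []"
  shows "\<exists>w k. \<sigma> = w @ drop k \<pi> \<and> k < length \<pi> \<and> length w + k \<le> n"
  using assms(1)
proof (induction n arbitrary: \<sigma>)
  case 0
  then show ?case using assms(2) by (intro exI[of _ "[]"] exI[of _ 0]) auto
next
  case (Suc n)
  then obtain \<rho> where "(indel_step q ^^ n) \<pi> \<rho>" and step: "indel_step q \<rho> \<sigma>"
    by auto
  with Suc.IH obtain w k where \<rho>: "\<rho> = w @ drop k \<pi>" "k < length \<pi>" "length w + k \<le> n"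
    by blast
  from step consider (del) "2 \<le> length \<rho>" "\<sigma> = tl \<rho>" | (ins) a where "\<sigma> = a # \<rho>"
    unfolding indel_step_def by blast
  then show ?case
  proof cases
    case del
    show ?thesis
    proof (cases w)
      case Nil
      then show ?thesis using del \<rho>
        by (intro exI[of _ "[]"] exI[of _ "Suc k"]) (auto simp: drop_Suc tl_drop)
    next
      case (Cons b w')
      then show ?thesis using del \<rho> by (intro exI[of _ w'] exI[of _ k]) auto
    qed
  next
    case ins
    then show ?thesis using \<rho> by (intro exI[of _ "a # w"] exI[of _ k]) auto
  qed
qed

lemma mem_B_indel_shape:
  assumes "\<sigma> \<in> B_indel q t \<pi>" "\<pi> \<noteq> []"
  obtains w k where "\<sigma> = w @ drop k \<pi>" "k < length \<pi>" "length w + k \<le> t"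
proof -
  from assms(1) obtain n where n: "n \<le> t" "(indel_step q ^^ n) \<pi> \<sigma>"
    unfolding B_indel_def by auto
  from indel_steps_shape[OF n(2) assms(2)] obtain w k
    where "\<sigma> = w @ drop k \<pi>" "k < length \<pi>" "length w + k \<le> n"
    by blast
  with n(1) show ?thesis by (intro that[of w k]) auto
qed

lemma indel_steps_drop:
  "n < length \<pi> \<Longrightarrow> (indel_step q ^^ n) \<pi> (drop n \<pi>)"
proof (induction n)
  case (Suc n)
  then have "indel_step q (drop n \<pi>) (drop (Suc n) \<pi>)"
    unfolding indel_step_def by (intro disjI1) (auto simp: drop_Suc tl_drop)
  with Suc show ?case by auto
qed simp

lemma indel_steps_prepend:
  "distinct w \<Longrightarrow> set w \<subseteq> {..<q} \<Longrightarrow> set w \<inter> set \<pi> = {} \<Longrightarrow>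
    (indel_step q ^^ length w) \<pi> (w @ \<pi>)"
proof (induction w)
  case (Cons a w)
  then have "indel_step q (w @ \<pi>) (a # w @ \<pi>)"
    by (auto simp: indel_step_def)
  with Cons show ?case by auto
qed simp

lemma B_del_common_of_common_indel_word:
  assumes eq: "w1 @ drop k1 \<pi>1 = w2 @ drop k2 \<pi>2"
    and k1: "k1 < length \<pi>1" and k2: "k2 < length \<pi>2"
    and "length w1 + k1 \<le> t" "length w2 + k2 \<le> t"
    and shorter: "length (drop k1 \<pi>1) \<le> length (drop k2 \<pi>2)"
  shows "B_del (2 * t) \<pi>1 \<inter> B_del (2 * t) \<pi>2 \<noteq> {}"
proof -
  define j where "j = k2 + (length w1 - length w2)"
  have "length w1 + length (drop k1 \<pi>1) = length w2 + length (drop k2 \<pi>2)"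
    using arg_cong[OF eq, of length] by simp
  with shorter have w: "length w2 \<le> length w1" by linarith
  have "drop k1 \<pi>1 = drop (length w1) (w2 @ drop k2 \<pi>2)"
    using arg_cong[OF eq, of "drop (length w1)"] by simp
  also have "\<dots> = drop j \<pi>2"
    using w by (simp add: j_def add.commute)
  finally have common: "drop k1 \<pi>1 = drop j \<pi>2" .
  with k1 have "j < length \<pi>2"
    by (metis drop_eq_Nil2 length_drop not_le zero_less_diff)
  with assms(4,5) have "drop j \<pi>2 \<in> B_del (2 * t) \<pi>2"
    by (intro drop_mem_B_del) (auto simp: j_def)
  moreover have "drop k1 \<pi>1 \<in> B_del (2 * t) \<pi>1"
    using k1 assms(4) by (intro drop_mem_B_del) auto
  ultimately show ?thesis
    using common by auto
qed

lemma B_indel_disjoint_if_B_del_disjoint: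
  assumes "\<pi>1 \<noteq> []" "\<pi>2 \<noteq> []" and disj: "B_del (2 * t) \<pi>1 \<inter> B_del (2 * t) \<pi>2 = {}"
  shows "B_indel q t \<pi>1 \<inter> B_indel q t \<pi>2 = {}"
proof (rule equals0I)
  fix \<sigma> assume "\<sigma> \<in> B_indel q t \<pi>1 \<inter> B_indel q t \<pi>2"
  then have "\<sigma> \<in> B_indel q t \<pi>1" "\<sigma> \<in> B_indel q t \<pi>2" by auto
  obtain w1 k1 where 1: "\<sigma> = w1 @ drop k1 \<pi>1" "k1 < length \<pi>1" "length w1 + k1 \<le> t"
    using mem_B_indel_shape[OF \<open>\<sigma> \<in> B_indel q t \<pi>1\<close> assms(1)] .
  obtain w2 k2 where 2: "\<sigma> = w2 @ drop k2 \<pi>2" "k2 < length \<pi>2" "length w2 + k2 \<le> t"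
    using mem_B_indel_shape[OF \<open>\<sigma> \<in> B_indel q t \<pi>2\<close> assms(2)] .
  show False
  proof (cases "length (drop k1 \<pi>1) \<le> length (drop k2 \<pi>2)")
    case True
    with 1 2 disj show False
      using B_del_common_of_common_indel_word[of w1 k1 \<pi>1 w2 k2 \<pi>2 t] by simp
  next
    case False
    with 1 2 disj show False
      using B_del_common_of_common_indel_word[of w2 k2 \<pi>2 w1 k1 \<pi>1 t] by (simp add: Int_commute)
  qed
qed

lemma tail_indel_correcting_if_tail_del_correcting:
  assumes "C \<subseteq> S_all q" "tail_del_correcting (2 * t) C"
  shows "tail_indel_correcting q t C"
  unfolding tail_indel_correcting_def
proof (intro ballI impI)
  fix \<pi>1 \<pi>2 assume "\<pi>1 \<in> C" "\<pi>2 \<in> C" "\<pi>1 \<noteq> \<pi>2"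
  with assms(2) have "B_del (2 * t) \<pi>1 \<inter> B_del (2 * t) \<pi>2 = {}"
    unfolding tail_del_correcting_def by blast
  moreover have "\<pi>1 \<noteq> []" "\<pi>2 \<noteq> []"
    using \<open>\<pi>1 \<in> C\<close> \<open>\<pi>2 \<in> C\<close> assms(1) by (auto simp: S_all_def pperm_def)
  ultimately show "B_indel q t \<pi>1 \<inter> B_indel q t \<pi>2 = {}"
    by (intro B_indel_disjoint_if_B_del_disjoint)
qed

lemma B_indel_disjoint_example: "B_indel 4 1 [0, 1, 2] \<inter> B_indel 4 1 [3, 2] = {}"
proof (rule equals0I)
  fix \<sigma> assume "\<sigma> \<in> B_indel 4 1 [0, 1, 2] \<inter> B_indel 4 1 [3, 2]"
  then have "\<sigma> \<in> B_indel 4 1 [0, 1, 2]" "\<sigma> \<in> B_indel 4 1 [3, 2]" by auto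
  obtain w1 k1 where 1: "\<sigma> = w1 @ drop k1 [0, 1, 2]" "length w1 + k1 \<le> 1"
    by (rule mem_B_indel_shape[OF \<open>\<sigma> \<in> B_indel 4 1 [0, 1, 2]\<close>]) auto
  obtain w2 k2 where 2: "\<sigma> = w2 @ drop k2 [3, 2]" "length w2 + k2 \<le> 1"
    by (rule mem_B_indel_shape[OF \<open>\<sigma> \<in> B_indel 4 1 [3, 2]\<close>]) auto
  from 1 have "\<sigma> \<in> {[0, 1, 2], [1, 2]} \<or> (\<exists>a. \<sigma> = [a, 0, 1, 2])"
    by (cases w1; cases k1) auto
  moreover from 2 have "\<sigma> \<in> {[3, 2], [2]} \<or> (\<exists>a. \<sigma> = [a, 3, 2])"
    by (cases w2; cases k2) auto
  ultimately show False by auto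
qed

lemma tail_indel_correcting_not_tail_del_correcting_example:
  "tail_indel_correcting 4 1 {[0, 1, 2], [3, 2]} \<and> \<not> tail_del_correcting 2 {[0, 1, 2], [3, 2]}"
proof -
  have "[2] \<in> B_del 2 [0, 1, 2 :: nat] \<inter> B_del 2 [3, 2]"
    using drop_mem_B_del[of 2 "[0, 1, 2 :: nat]" 2] drop_mem_B_del[of 1 "[3, 2 :: nat]" 2]
    by simp
  then show ?thesis
    using B_indel_disjoint_example by (auto simp: tail_del_correcting_pair tail_indel_correcting_pair)
qed

lemma tail_del_correcting_not_tail_indel_correcting_example:
  assumes "1 \<le> t"
  shows "tail_del_correcting (2 * t - 1) {[2 * t], [0..<2 * t + 1]}
    \<and> \<not> tail_indel_correcting (2 * t + 1) t {[2 * t], [0..<2 * t + 1]}"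
proof -
  have distinct: "[2 * t] \<noteq> [0..<2 * t + 1]"
    using assms by (simp add: upt_conv_Cons)
  have "length [0..<2 * t + 1] - (2 * t - 1) = 2"
    using assms by simp
  then have "[2 * t] \<notin> B_del (2 * t - 1) [0..<2 * t + 1]"
    using length_mem_B_del[of "[2 * t]" "2 * t - 1" "[0..<2 * t + 1]"] by auto
  then have del: "B_del (2 * t - 1) [2 * t] \<inter> B_del (2 * t - 1) [0..<2 * t + 1] = {}"
    by (simp add: B_del_singleton)
  have "(indel_step (2 * t + 1) ^^ length [t..<2 * t]) [2 * t] ([t..<2 * t] @ [2 * t])"
    by (rule indel_steps_prepend) auto
  moreover have "length [t..<2 * t] = t" "[t..<2 * t] @ [2 * t] = drop t [0..<2 * t + 1]"
    by (simp_all add: upt_add_eq_append)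
  \<comment> \<open>The common word is kept as \<open>drop t [0..<2 * t + 1]\<close>: the simp rule \<open>upt_Suc\<close> would
    split \<open>[t..<2 * t + 1]\<close> back into \<open>[t..<2 * t] @ [2 * t]\<close> and loop.\<close>
  ultimately have "(indel_step (2 * t + 1) ^^ t) [2 * t] (drop t [0..<2 * t + 1])"
    by (simp only:)
  moreover have "(indel_step (2 * t + 1) ^^ t) [0..<2 * t + 1] (drop t [0..<2 * t + 1])"
    by (rule indel_steps_drop) simp
  ultimately have "B_indel (2 * t + 1) t [2 * t] \<inter> B_indel (2 * t + 1) t [0..<2 * t + 1] \<noteq> {}"
    unfolding B_indel_def by blast
  with del distinct show ?thesis
    by (simp only: tail_del_correcting_pair tail_indel_correcting_pair simp_thms)
qed

theorem mainTheorem6: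
  shows "(\<forall>q t C. 1 \<le> q \<longrightarrow> C \<subseteq> S_all q \<longrightarrow>
            tail_del_correcting (2 * t) C \<longrightarrow> tail_indel_correcting q t C)
       \<and> (\<exists>q t C. 1 \<le> q \<and> C \<subseteq> S_all q \<and>
            tail_indel_correcting q t C \<and> \<not> tail_del_correcting (2 * t) C)
       \<and> (\<forall>t. 1 \<le> t \<longrightarrow> (\<exists>q C. 1 \<le> q \<and> C \<subseteq> S_all q \<and>
            tail_del_correcting (2 * t - 1) C \<and> \<not> tail_indel_correcting q t C))"
proof (intro conjI allI impI)
  show "tail_indel_correcting q t C" if "C \<subseteq> S_all q" "tail_del_correcting (2 * t) C"
    for q t C
    using that by (rule tail_indel_correcting_if_tail_del_correcting)
  have "{[0, 1, 2], [3, 2]} \<subseteq> S_all 4"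
    by (auto simp: S_all_def pperm_def)
  with tail_indel_correcting_not_tail_del_correcting_example
  show "\<exists>q t C. 1 \<le> q \<and> C \<subseteq> S_all q \<and>
      tail_indel_correcting q t C \<and> \<not> tail_del_correcting (2 * t) C"
    by (intro exI[of _ 4] exI[of _ 1] exI[of _ "{[0, 1, 2], [3, 2]}"]) simp
  fix t :: nat
  assume "1 \<le> t"
  have "{[2 * t], [0..<2 * t + 1]} \<subseteq> S_all (2 * t + 1)"
    by (auto simp: S_all_def pperm_def)
  with tail_del_correcting_not_tail_indel_correcting_example[OF \<open>1 \<le> t\<close>]
  show "\<exists>q C. 1 \<le> q \<and> C \<subseteq> S_all q \<and>
      tail_del_correcting (2 * t - 1) C \<and> \<not> tail_indel_correcting q t C"
    by (intro exI[of _ "2 * t + 1"] exI[of _ "{[2 * t], [0..<2 * t + 1]}"]) simp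
qed

end
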